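(* Let $c\in\mathbb{R}\setminus\{0\}$. The group of direct isometries of the hyperboloid $(H,\mathrm{g}_c)$ satisfies $$\mathrm{Isom}_+(H,\mathrm{g}_c)=\ker(S_c)\cong\mathrm{PSL}(2,\mathbb{R}),$$ where $\mathrm{Isom}_+(H,\mathrm{g}_c)=\{\varphi\in\mathrm{Diff}_+(\mathbb{T}):(\varphi\times\varphi)^*\mathrm{g}_c=\mathrm{g}_c\}$ and $\ker(S_c)=\{\varphi\in\mathrm{Diff}_+(\mathbb{T}):S_c(\varphi)=0\}$.
   Context: $\mathbb{T}=\mathbb{R}/2\pi\mathbb{Z}$, $H=\mathbb{T}\times\mathbb{T}-\Delta$ with $\Delta$ the diagonal, $\mathrm{g}_c=\dfrac{4c\,d\theta_1d\theta_2}{|e^{i\theta_1}-e^{i\theta_2}|^2}$. $\mathrm{Diff}_+(\mathbb{T})$ acts on $H$ by $\varphi\mapsto\varphi\times\varphi$ (the orientation-preserving conformal diffeomorphisms). $S_c(\varphi)=\tfrac32\big((\varphi\times\varphi)^*\mathrm{g}_c-\mathrm{g}_c\big)|_\Delta$, where the tensor extends smoothly across $\Delta$ and $|_\Delta$ is pullback by $\theta\mapsto(\theta,\theta)$; equivalently $S_c(\varphi)=c\big(S(\varphi)+\tfrac12(\varphi'^2-1)d\theta^2\big)$ with $S(\varphi)=\big(\varphi'''/\varphi'-\tfrac32(\varphi''/\varphi')^2\big)d\theta^2$ computed on a lift of $\varphi$ to $\mathbb{R}$. *)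

theory Defs
  imports "HOL-Analysis.Analysis" "HOL-Algebra.Coset"
begin

text \<open>Elements of Diff_+(T) are represented by their lifts f : R -> R
  (smooth, f' > 0, f(x + 2 pi) = f x + 2 pi), normalised so that 0 <= f 0 < 2 pi;
  this picks exactly one lift per diffeomorphism of T = R/2piZ.\<close>

definition smooth_fun :: "(real \<Rightarrow> real) \<Rightarrow> bool" where
  "smooth_fun f \<longleftrightarrow> (\<forall>n. \<forall>x. ((deriv ^^ n) f) differentiable (at x))"

definition circle_diff_lift :: "(real \<Rightarrow> real) \<Rightarrow> bool" where
  "circle_diff_lift f \<longleftrightarrow> smooth_fun f \<and> (\<forall>x. deriv f x > 0)
     \<and> (\<forall>x. f (x + 2 * pi) = f x + 2 * pi)"

definition normalize_lift :: "(real \<Rightarrow> real) \<Rightarrow> (real \<Rightarrow> real)" where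
  "normalize_lift f = (\<lambda>x. f x - 2 * pi * of_int \<lfloor>f 0 / (2 * pi)\<rfloor>)"

definition DiffT :: "(real \<Rightarrow> real) monoid" where
  "DiffT = \<lparr> carrier = {f. circle_diff_lift f \<and> 0 \<le> f 0 \<and> f 0 < 2 * pi},
             mult = (\<lambda>f g. normalize_lift (f \<circ> g)),
             one = id \<rparr>"

text \<open>(phi x phi)^* g_c = g_c, written in coordinates on H (off the diagonal).\<close>
definition isom_plus :: "real \<Rightarrow> (real \<Rightarrow> real) set" where
  "isom_plus c = {f \<in> carrier DiffT. \<forall>x y. exp (\<i> * complex_of_real x) \<noteq> exp (\<i> * complex_of_real y) \<longrightarrow>
      4 * c * deriv f x * deriv f y / (cmod (exp (\<i> * complex_of_real (f x)) - exp (\<i> * complex_of_real (f y))))\<^sup>2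
      = 4 * c / (cmod (exp (\<i> * complex_of_real x) - exp (\<i> * complex_of_real y)))\<^sup>2}"

text \<open>S_c(phi) = c (S(phi) + (phi'^2 - 1)/2) d theta^2, computed on the lift.\<close>
definition S_c :: "real \<Rightarrow> (real \<Rightarrow> real) \<Rightarrow> real \<Rightarrow> real" where
  "S_c c f x = c * ( (deriv ^^ 3) f x / deriv f x - 3/2 * ((deriv ^^ 2) f x / deriv f x)\<^sup>2
                    + 1/2 * ((deriv f x)\<^sup>2 - 1))"

definition ker_S_c :: "real \<Rightarrow> (real \<Rightarrow> real) set" where
  "ker_S_c c = {f \<in> carrier DiffT. \<forall>x. S_c c f x = 0}"

definition SL2R :: "(real^2^2) monoid" where
  "SL2R = \<lparr> carrier = {A. det A = 1}, mult = (**), one = mat 1 \<rparr>"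

definition PSL2R where
  "PSL2R = SL2R Mod {mat 1, - mat 1}"

end

theory Submission
  imports Defs
begin

text \<open>
  Represent an element of Diff_+(T) by its lift f and consider the half-angle frame
  u = cos (f/2) / sqrt f', w = sin (f/2) / sqrt f'. The diffeomorphism is the projective action of
  A = ((a, b), (c, d)) in SL(2,R) on the half-angle exactly when (u, w) = A (cos (x/2), sin (x/2)).

  For such an f, sin ((f y - f x) / 2) = sqrt (f' x) sqrt (f' y) sin ((y - x) / 2), which is the
  isometry condition since |e^(i x) - e^(i y)| = 2 |sin ((x - y) / 2)|, and S_c(f) = 0 is a direct
  computation with f' = 1 / |A (cos (x/2), sin (x/2))|^2. Conversely, S_c(f) = 0 says u'' = -u/4 and
  w'' = -w/4, so u and w are combinations of cos (x/2) and sin (x/2) with Wronskian 1/2; and an isometry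
  has u x w y - w x u y = sin ((y - x) / 2) for all x and y, which forces the same form.

  The lift determines A up to sign, composition of lifts corresponds to matrix multiplication, and
  every A in SL(2,R) has a lift: writing A as a rotation times a positive definite symmetric matrix P,
  the lift of P is x + 2 arctan of a quotient of quadratic forms.
\<close>

section \<open>Trigonometric rational functions\<close>

inductive_set trig_rational :: "(real \<Rightarrow> real) set" where
  const: "(\<lambda>x. k) \<in> trig_rational"
| cos: "(\<lambda>x. cos (a * x)) \<in> trig_rational"
| sin: "(\<lambda>x. sin (a * x)) \<in> trig_rational"
| add: "f \<in> trig_rational \<Longrightarrow> g \<in> trig_rational \<Longrightarrow> (\<lambda>x. f x + g x) \<in> trig_rational"
| mult: "f \<in> trig_rational \<Longrightarrow> g \<in> trig_rational \<Longrightarrow> (\<lambda>x. f x * g x) \<in> trig_rational"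
| inverse: "f \<in> trig_rational \<Longrightarrow> (\<forall>x. f x \<noteq> 0) \<Longrightarrow> (\<lambda>x. 1 / f x) \<in> trig_rational"

lemma trig_rational_has_real_derivative:
  "f \<in> trig_rational \<Longrightarrow> \<exists>g\<in>trig_rational. \<forall>x. (f has_real_derivative g x) (at x)"
proof (induction rule: trig_rational.induct)
  case (const k)
  show ?case by (intro bexI[of _ "\<lambda>x. 0"]) (auto intro: trig_rational.intros)
next
  case (cos a)
  have "(\<lambda>x. (- a) * sin (a * x)) \<in> trig_rational"
    by (intro trig_rational.intros)
  then show ?case
    by (intro bexI[of _ "\<lambda>x. (- a) * sin (a * x)"]) (auto intro!: derivative_eq_intros)
next
  case (sin a)
  have "(\<lambda>x. a * cos (a * x)) \<in> trig_rational"
    by (intro trig_rational.intros)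
  then show ?case
    by (intro bexI[of _ "\<lambda>x. a * cos (a * x)"]) (auto intro!: derivative_eq_intros)
next
  case (add f g)
  then obtain f' g' where "f' \<in> trig_rational" "g' \<in> trig_rational"
    "\<forall>x. (f has_real_derivative f' x) (at x)" "\<forall>x. (g has_real_derivative g' x) (at x)"
    by blast
  then show ?case
    by (intro bexI[of _ "\<lambda>x. f' x + g' x"]) (auto intro!: derivative_eq_intros trig_rational.intros)
next
  case (mult f g)
  then obtain f' g' where "f' \<in> trig_rational" "g' \<in> trig_rational"
    "\<forall>x. (f has_real_derivative f' x) (at x)" "\<forall>x. (g has_real_derivative g' x) (at x)"
    by blast
  then show ?case
    by (intro bexI[of _ "\<lambda>x. f' x * g x + f x * g' x"])
      (auto intro!: derivative_eq_intros trig_rational.intros simp: mult.hyps)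
next
  case (inverse f)
  then obtain f' where f': "f' \<in> trig_rational" "\<forall>x. (f has_real_derivative f' x) (at x)"
    by blast
  have "(\<lambda>x. f' x * ((\<lambda>x. -1) x * ((\<lambda>x. 1 / f x) x * (\<lambda>x. 1 / f x) x))) \<in> trig_rational"
    using f' inverse by (intro trig_rational.intros) auto
  moreover have "\<forall>x. ((\<lambda>x. 1 / f x) has_real_derivative f' x * (-1 * (1 / f x * (1 / f x)))) (at x)"
    using f' inverse.hyps(2)
    by (auto intro!: derivative_eq_intros simp: field_simps power2_eq_square)
  ultimately show ?case by auto
qed

lemma trig_rational_deriv: "f \<in> trig_rational \<Longrightarrow> deriv f \<in> trig_rational"
  using trig_rational_has_real_derivative DERIV_imp_deriv
  by (metis (no_types, lifting) ext)

lemma trig_rational_differentiable: "f \<in> trig_rational \<Longrightarrow> f differentiable (at x)"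
  using trig_rational_has_real_derivative real_differentiable_def by blast

lemma smooth_fun_if_deriv_trig_rational:
  assumes "\<And>x. f differentiable (at x)" and "deriv f \<in> trig_rational"
  shows "smooth_fun f"
  unfolding smooth_fun_def
proof (intro allI)
  fix n x
  show "(deriv ^^ n) f differentiable at x"
  proof (cases n)
    case 0
    then show ?thesis using assms(1) by simp
  next
    case (Suc m)
    have "(deriv ^^ m) (deriv f) \<in> trig_rational"
      using assms(2) by (induction m) (auto intro: trig_rational_deriv)
    then show ?thesis
      using Suc trig_rational_differentiable by (simp add: funpow_Suc_right del: funpow.simps)
  qed
qed

section \<open>Lifts of Moebius transformations\<close>

definition mobius_lift :: "real \<Rightarrow> real \<Rightarrow> real \<Rightarrow> real \<Rightarrow> (real \<Rightarrow> real) \<Rightarrow> bool" where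
  "mobius_lift a b c d f \<longleftrightarrow> (\<forall>x. f differentiable (at x)) \<and> (\<forall>x. deriv f x > 0) \<and>
     (\<forall>x. cos (f x / 2) = sqrt (deriv f x) * (a * cos (x / 2) + b * sin (x / 2)) \<and>
          sin (f x / 2) = sqrt (deriv f x) * (c * cos (x / 2) + d * sin (x / 2)))"

definition mobius_denom :: "real \<Rightarrow> real \<Rightarrow> real \<Rightarrow> real \<Rightarrow> real \<Rightarrow> real" where
  "mobius_denom a b c d x = (a * cos (x / 2) + b * sin (x / 2))\<^sup>2 + (c * cos (x / 2) + d * sin (x / 2))\<^sup>2"

lemma mobius_denom_eq:
  "mobius_denom a b c d x = (a\<^sup>2 + b\<^sup>2 + c\<^sup>2 + d\<^sup>2) / 2 + (a\<^sup>2 + c\<^sup>2 - b\<^sup>2 - d\<^sup>2) / 2 * cos x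
     + (a * b + c * d) * sin x"
proof -
  have "cos x = (cos (x / 2))\<^sup>2 - (sin (x / 2))\<^sup>2" "sin x = 2 * sin (x / 2) * cos (x / 2)"
    using cos_double[of "x / 2"] sin_double[of "x / 2"] by simp_all
  moreover have "(a * C + b * S)\<^sup>2 + (c * C + d * S)\<^sup>2 = (a\<^sup>2 + b\<^sup>2 + c\<^sup>2 + d\<^sup>2) / 2
      + (a\<^sup>2 + c\<^sup>2 - b\<^sup>2 - d\<^sup>2) / 2 * (C\<^sup>2 - S\<^sup>2) + (a * b + c * d) * (2 * S * C)"
    if "S\<^sup>2 + C\<^sup>2 = 1" for C S :: real
  proof -
    have "(a * C + b * S)\<^sup>2 + (c * C + d * S)\<^sup>2 = (a\<^sup>2 + b\<^sup>2 + c\<^sup>2 + d\<^sup>2) / 2 * (S\<^sup>2 + C\<^sup>2)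
      + (a\<^sup>2 + c\<^sup>2 - b\<^sup>2 - d\<^sup>2) / 2 * (C\<^sup>2 - S\<^sup>2) + (a * b + c * d) * (2 * S * C)"
      by (simp add: power2_eq_square algebra_simps divide_simps)
    then show ?thesis using that by simp
  qed
  ultimately show ?thesis unfolding mobius_denom_def by simp
qed

lemma mobius_denom_pos:
  assumes "a * d - b * c \<noteq> 0"
  shows "mobius_denom a b c d x > 0"
proof -
  have "mobius_denom a b c d x \<noteq> 0"
  proof
    assume "mobius_denom a b c d x = 0"
    then have "a * cos (x / 2) + b * sin (x / 2) = 0" "c * cos (x / 2) + d * sin (x / 2) = 0"
      unfolding mobius_denom_def by (simp_all add: sum_power2_eq_zero_iff)
    moreover have "(a * d - b * c) * cos (x / 2)
        = d * (a * cos (x / 2) + b * sin (x / 2)) - b * (c * cos (x / 2) + d * sin (x / 2))"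
      "(a * d - b * c) * sin (x / 2)
        = a * (c * cos (x / 2) + d * sin (x / 2)) - c * (a * cos (x / 2) + b * sin (x / 2))"
      by (simp_all add: algebra_simps)
    ultimately have "(a * d - b * c) * cos (x / 2) = 0" "(a * d - b * c) * sin (x / 2) = 0"
      by simp_all
    then show False using assms sin_cos_squared_add[of "x / 2"] by simp
  qed
  then show ?thesis unfolding mobius_denom_def by (simp add: add_pos_nonneg order_less_le)
qed

lemma mobius_denom_trig_rational: "(\<lambda>x. mobius_denom a b c d x) \<in> trig_rational"
proof -
  have lin: "(\<lambda>x. a * cos ((1/2) * x) + b * sin ((1/2) * x)) \<in> trig_rational" for a b
    by (intro trig_rational.intros)
  have "(\<lambda>x. (a * cos ((1/2) * x) + b * sin ((1/2) * x)) * (a * cos ((1/2) * x) + b * sin ((1/2) * x))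
      + (c * cos ((1/2) * x) + d * sin ((1/2) * x)) * (c * cos ((1/2) * x) + d * sin ((1/2) * x)))
      \<in> trig_rational"
    by (intro trig_rational.add trig_rational.mult lin)
  then show ?thesis by (simp add: mobius_denom_def power2_eq_square)
qed

lemma deriv_mobius_lift:
  assumes "mobius_lift a b c d f"
  shows "deriv f x = 1 / mobius_denom a b c d x"
proof -
  from assms have pos: "deriv f x > 0"
    and cos_eq: "cos (f x / 2) = sqrt (deriv f x) * (a * cos (x / 2) + b * sin (x / 2))"
    and sin_eq: "sin (f x / 2) = sqrt (deriv f x) * (c * cos (x / 2) + d * sin (x / 2))"
    unfolding mobius_lift_def by auto
  have sq: "(sqrt (deriv f x) * A)\<^sup>2 = deriv f x * A\<^sup>2" for A
    using pos by (simp add: power_mult_distrib)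
  have "(cos (f x / 2))\<^sup>2 + (sin (f x / 2))\<^sup>2 = deriv f x * mobius_denom a b c d x"
    unfolding cos_eq sin_eq mobius_denom_def sq by (simp add: distrib_left)
  then show ?thesis by (auto simp: eq_divide_eq mult.commute)
qed

lemma mobius_denom_pos_if_lift: "mobius_lift a b c d f \<Longrightarrow> mobius_denom a b c d x > 0"
  using deriv_mobius_lift[of a b c d f x] unfolding mobius_lift_def
  by (metis zero_less_divide_1_iff)

lemma mobius_lift_smooth: "mobius_lift a b c d f \<Longrightarrow> smooth_fun f"
proof (rule smooth_fun_if_deriv_trig_rational)
  assume lift: "mobius_lift a b c d f"
  then show "f differentiable (at x)" for x unfolding mobius_lift_def by simp
  have "\<forall>x. mobius_denom a b c d x \<noteq> 0"
    using mobius_denom_pos_if_lift[OF lift] by (simp add: less_imp_neq[symmetric])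
  then have "(\<lambda>x. 1 / mobius_denom a b c d x) \<in> trig_rational"
    by (intro trig_rational.inverse mobius_denom_trig_rational)
  moreover have "deriv f = (\<lambda>x. 1 / mobius_denom a b c d x)"
    using deriv_mobius_lift[OF lift] by (rule ext)
  ultimately show "deriv f \<in> trig_rational" by simp
qed

lemma DiffT_carrierD:
  assumes "f \<in> carrier DiffT"
  shows "deriv f x > 0" "f (x + 2 * pi) = f x + 2 * pi" "0 \<le> f 0" "f 0 < 2 * pi"
    and "((deriv ^^ n) f has_real_derivative (deriv ^^ Suc n) f x) (at x)"
proof -
  from assms have lift: "circle_diff_lift f" and "0 \<le> f 0" "f 0 < 2 * pi"
    by (auto simp: DiffT_def)
  then show "deriv f x > 0" "f (x + 2 * pi) = f x + 2 * pi" "0 \<le> f 0" "f 0 < 2 * pi"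
    by (auto simp: circle_diff_lift_def)
  from lift have "(deriv ^^ n) f differentiable (at x)"
    by (auto simp: circle_diff_lift_def smooth_fun_def)
  then show "((deriv ^^ n) f has_real_derivative (deriv ^^ Suc n) f x) (at x)"
    by (simp add: DERIV_deriv_iff_real_differentiable)
qed

lemma DiffT_carrier_has_derivatives:
  assumes "f \<in> carrier DiffT"
  shows "(f has_real_derivative deriv f x) (at x)"
    and "(deriv f has_real_derivative (deriv ^^ 2) f x) (at x)"
    and "((deriv ^^ 2) f has_real_derivative (deriv ^^ 3) f x) (at x)"
  using DiffT_carrierD(5)[OF assms, of 0 x] DiffT_carrierD(5)[OF assms, of 1 x]
    DiffT_carrierD(5)[OF assms, of 2 x]
  by (simp_all add: numeral_2_eq_2 numeral_3_eq_3)

lemma DiffT_carrier_differentiable: "f \<in> carrier DiffT \<Longrightarrow> f differentiable (at x)"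
  using DiffT_carrier_has_derivatives(1) real_differentiable_def by blast

lemma carrier_DiffT_if_mobius_lift:
  assumes "mobius_lift a b c d f" and "\<And>x. f (x + 2 * pi) = f x + 2 * pi"
    and "0 \<le> f 0" and "f 0 < 2 * pi"
  shows "f \<in> carrier DiffT"
  using assms mobius_lift_smooth[OF assms(1)]
  unfolding DiffT_def circle_diff_lift_def mobius_lift_def by simp

lemma cmod_exp_i_diff_sq:
  "(cmod (exp (\<i> * complex_of_real x) - exp (\<i> * complex_of_real y)))\<^sup>2 = 4 * (sin ((x - y) / 2))\<^sup>2"
proof -
  have "(cmod (exp (\<i> * complex_of_real x) - exp (\<i> * complex_of_real y)))\<^sup>2
      = (cos x - cos y)\<^sup>2 + (sin x - sin y)\<^sup>2"
    by (simp add: cis_conv_exp[symmetric] cmod_power2)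
  also have "\<dots> = 2 - 2 * cos (x - y)"
    by (simp add: cos_diff power2_eq_square algebra_simps)
  also have "cos (x - y) = 1 - 2 * (sin ((x - y) / 2))\<^sup>2"
    using cos_double_sin[of "(x - y) / 2"]
    by (metis nonzero_mult_div_cancel_left times_divide_eq_right zero_neq_numeral)
  finally show ?thesis by simp
qed

lemma isom_plus_iff:
  assumes "k \<noteq> 0"
  shows "f \<in> isom_plus k \<longleftrightarrow> f \<in> carrier DiffT \<and> (\<forall>x y. sin ((x - y) / 2) \<noteq> 0 \<longrightarrow>
           (sin ((f x - f y) / 2))\<^sup>2 = deriv f x * deriv f y * (sin ((x - y) / 2))\<^sup>2)"
proof -
  have exp_eq_iff: "exp (\<i> * complex_of_real x) \<noteq> exp (\<i> * complex_of_real y) \<longleftrightarrow> sin ((x - y) / 2) \<noteq> 0"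
    for x y
    using cmod_exp_i_diff_sq[of x y] by auto
  have "4 * k * deriv f x * deriv f y / (4 * (sin ((f x - f y) / 2))\<^sup>2)
        = 4 * k / (4 * (sin ((x - y) / 2))\<^sup>2)
      \<longleftrightarrow> (sin ((f x - f y) / 2))\<^sup>2 = deriv f x * deriv f y * (sin ((x - y) / 2))\<^sup>2"
    if "f \<in> carrier DiffT" "sin ((x - y) / 2) \<noteq> 0" for x y
  proof (cases "sin ((f x - f y) / 2) = 0")
    case True
    then show ?thesis
      using that assms DiffT_carrierD(1)[OF that(1), of x] DiffT_carrierD(1)[OF that(1), of y]
      by auto
  next
    case False
    then show ?thesis using that assms by (auto simp: field_simps)
  qed
  then show ?thesis unfolding isom_plus_def cmod_exp_i_diff_sq exp_eq_iff by auto
qed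

lemma mobius_lift_sin_half_diff:
  assumes "mobius_lift a b c d f"
  shows "sin ((f y - f x) / 2)
           = (a * d - b * c) * sqrt (deriv f x) * sqrt (deriv f y) * sin ((y - x) / 2)"
proof -
  from assms have
    "cos (f x / 2) = sqrt (deriv f x) * (a * cos (x / 2) + b * sin (x / 2))"
    "sin (f x / 2) = sqrt (deriv f x) * (c * cos (x / 2) + d * sin (x / 2))"
    "cos (f y / 2) = sqrt (deriv f y) * (a * cos (y / 2) + b * sin (y / 2))"
    "sin (f y / 2) = sqrt (deriv f y) * (c * cos (y / 2) + d * sin (y / 2))"
    unfolding mobius_lift_def by auto
  then have "sin (f y / 2 - f x / 2) = sqrt (deriv f x) * sqrt (deriv f y) *
      ((a * d - b * c) * (sin (y / 2) * cos (x / 2) - cos (y / 2) * sin (x / 2)))"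
    unfolding sin_diff by (simp add: algebra_simps)
  also have "sin (y / 2) * cos (x / 2) - cos (y / 2) * sin (x / 2) = sin (y / 2 - x / 2)"
    by (simp add: sin_diff)
  finally show ?thesis by (simp add: diff_divide_distrib)
qed

lemma mobius_lift_in_isom_plus:
  assumes "k \<noteq> 0" and "f \<in> carrier DiffT" and "mobius_lift a b c d f" and "a * d - b * c = 1"
  shows "f \<in> isom_plus k"
proof -
  have sqrt_sq: "(sqrt (deriv f x))\<^sup>2 = deriv f x" for x
    using DiffT_carrierD(1)[OF assms(2)] by (simp add: less_imp_le)
  have "(sin ((f x - f y) / 2))\<^sup>2 = deriv f x * deriv f y * (sin ((x - y) / 2))\<^sup>2" for x y
    using mobius_lift_sin_half_diff[OF assms(3), of x y] assms(4)
    by (simp add: power_mult_distrib sqrt_sq)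
  then show ?thesis using assms(1,2) by (simp add: isom_plus_iff)
qed

lemma S_c_reciprocal_sinusoid:
  assumes pos: "\<And>x. e + p * cos x + q * sin x > 0"
    and f': "deriv f = (\<lambda>x. 1 / (e + p * cos x + q * sin x))"
  shows "S_c k f x = k * (1 + p\<^sup>2 + q\<^sup>2 - e\<^sup>2) / (2 * (e + p * cos x + q * sin x)\<^sup>2)"
proof -
  define E where "E = (\<lambda>x. e + p * cos x + q * sin x)"
  define E' where "E' = (\<lambda>x. q * cos x - p * sin x)"
  have E_pos: "E x > 0" for x using pos by (simp add: E_def)
  have dE: "(E has_real_derivative E' x) (at x)" for x
    unfolding E_def E'_def by (auto intro!: derivative_eq_intros)
  have dE': "(E' has_real_derivative e - E x) (at x)" for x
    unfolding E_def E'_def by (auto intro!: derivative_eq_intros)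
  have f'E: "deriv f = (\<lambda>x. 1 / E x)" using f' by (simp add: E_def)
  have "((\<lambda>x. 1 / E x) has_real_derivative - E' x / (E x)\<^sup>2) (at x)" for x
    using E_pos[of x] by (auto intro!: derivative_eq_intros dE simp: field_simps power2_eq_square)
  then have "deriv (\<lambda>x. 1 / E x) = (\<lambda>x. - E' x / (E x)\<^sup>2)"
    by (intro ext DERIV_imp_deriv)
  then have f'': "(deriv ^^ 2) f = (\<lambda>x. - E' x / (E x)\<^sup>2)"
    by (simp add: numeral_2_eq_2 f'E)
  have "((\<lambda>x. - E' x / (E x)\<^sup>2) has_real_derivative
      (- (e - E x) / (E x)\<^sup>2 + 2 * (E' x)\<^sup>2 / (E x)^3)) (at x)" for x using E_pos[of x]
    by (auto intro!: derivative_eq_intros dE dE' simp: field_simps power2_eq_square power3_eq_cube)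
  then have "deriv (\<lambda>x. - E' x / (E x)\<^sup>2) = (\<lambda>x. - (e - E x) / (E x)\<^sup>2 + 2 * (E' x)\<^sup>2 / (E x)^3)"
    by (intro ext DERIV_imp_deriv)
  then have f''': "(deriv ^^ 3) f = (\<lambda>x. - (e - E x) / (E x)\<^sup>2 + 2 * (E' x)\<^sup>2 / (E x)^3)"
    using f'' by (simp add: numeral_3_eq_3 numeral_2_eq_2)
  have E'_sq: "(E' x)\<^sup>2 = p\<^sup>2 + q\<^sup>2 - (E x - e)\<^sup>2"
  proof -
    have "(q * C - p * S)\<^sup>2 + (p * C + q * S)\<^sup>2 = (p\<^sup>2 + q\<^sup>2) * (S\<^sup>2 + C\<^sup>2)" for C S :: real
      by (simp add: power2_eq_square algebra_simps)
    from this[of "cos x" "sin x"] show ?thesis by (simp add: E'_def E_def)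
  qed
  have "S_c k f x = k * ((- (e - E x) / (E x)\<^sup>2 + 2 * (E' x)\<^sup>2 / (E x)^3) / (1 / E x)
      - 3/2 * ((- E' x / (E x)\<^sup>2) / (1 / E x))\<^sup>2 + 1/2 * ((1 / E x)\<^sup>2 - 1))"
    unfolding S_c_def f''' f'' f'E ..
  also have "\<dots> = k * ((2 * (E x - e) * E x + (E' x)\<^sup>2 + 1 - (E x)\<^sup>2) / (2 * (E x)\<^sup>2))"
    using E_pos[of x] by (simp add: field_simps power2_eq_square power3_eq_cube)
  also have "2 * (E x - e) * E x + (E' x)\<^sup>2 + 1 - (E x)\<^sup>2 = 1 + p\<^sup>2 + q\<^sup>2 - e\<^sup>2"
    unfolding E'_sq by (simp add: power2_eq_square algebra_simps)
  finally show ?thesis by (simp add: E_def)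
qed

lemma mobius_lift_in_ker_S_c:
  assumes "f \<in> carrier DiffT" and lift: "mobius_lift a b c d f" and det: "a * d - b * c = 1"
  shows "f \<in> ker_S_c k"
proof -
  define e where "e = (a\<^sup>2 + b\<^sup>2 + c\<^sup>2 + d\<^sup>2) / 2"
  define p where "p = (a\<^sup>2 + c\<^sup>2 - b\<^sup>2 - d\<^sup>2) / 2"
  define q where "q = a * b + c * d"
  have denom: "mobius_denom a b c d x = e + p * cos x + q * sin x" for x
    unfolding mobius_denom_eq e_def p_def q_def ..
  have "e\<^sup>2 - p\<^sup>2 - q\<^sup>2 = (a * d - b * c)\<^sup>2"
    unfolding e_def p_def q_def by (simp add: power2_eq_square algebra_simps divide_simps)
  then have "1 + p\<^sup>2 + q\<^sup>2 - e\<^sup>2 = 0" using det by simp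
  moreover have "S_c k f x = k * (1 + p\<^sup>2 + q\<^sup>2 - e\<^sup>2) / (2 * (e + p * cos x + q * sin x)\<^sup>2)" for x
    using mobius_denom_pos[of a d b c] det deriv_mobius_lift[OF lift]
    by (intro S_c_reciprocal_sinusoid) (auto simp: denom)
  ultimately show ?thesis using assms(1) by (simp add: ker_S_c_def)
qed

lemma harmonic_oscillator_zero:
  fixes y y' :: "real \<Rightarrow> real"
  assumes "k > 0"
    and "\<And>x. (y has_real_derivative y' x) (at x)" and "\<And>x. (y' has_real_derivative - k * y x) (at x)"
    and "y 0 = 0" and "y' 0 = 0"
  shows "y x = 0"
proof -
  define energy where "energy = (\<lambda>x. (y' x)\<^sup>2 + k * (y x)\<^sup>2)"
  have "(energy has_real_derivative 0) (at x)" for x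
    unfolding energy_def by (auto intro!: derivative_eq_intros assms(2,3))
  then have "energy x = energy 0" by (intro DERIV_isconst_all) auto
  then have "(y' x)\<^sup>2 + k * (y x)\<^sup>2 = 0" using assms(4,5) by (simp add: energy_def)
  then show ?thesis using assms(1)
    by (metis add_nonneg_eq_0_iff mult_eq_0_iff power_eq_0_iff less_irrefl
        mult_nonneg_nonneg less_imp_le zero_le_power2)
qed

text \<open>The Schwarzian equation says exactly that cos (f/2 - theta) / sqrt f' solves u'' = - u / 4.\<close>

lemma schwarzian_equation_half_angle_oscillator:
  fixes f f' f'' f''' :: "real \<Rightarrow> real" and \<theta> :: real
  assumes df: "\<And>x. (f has_real_derivative f' x) (at x)"
    and df': "\<And>x. (f' has_real_derivative f'' x) (at x)"
    and df'': "\<And>x. (f'' has_real_derivative f''' x) (at x)"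
    and pos: "\<And>x. f' x > 0"
    and schwarzian: "\<And>x. f''' x / f' x - 3/2 * (f'' x / f' x)\<^sup>2 + 1/2 * ((f' x)\<^sup>2 - 1) = 0"
  defines "u \<equiv> \<lambda>x. cos (f x / 2 - \<theta>) / sqrt (f' x)"
    and "u' \<equiv> \<lambda>x. - f'' x * cos (f x / 2 - \<theta>) / (2 * sqrt (f' x) ^ 3)
                   - sqrt (f' x) * sin (f x / 2 - \<theta>) / 2"
  shows "(u has_real_derivative u' x) (at x)" and "(u' has_real_derivative - (1/4) * u x) (at x)"
proof -
  define s where "s = (\<lambda>x. sqrt (f' x))"
  have s_pos: "s x > 0" for x using pos by (simp add: s_def)
  have s_sq: "s x * s x = f' x" for x using pos[of x] by (simp add: s_def)
  have ds: "(s has_real_derivative f'' x / (2 * s x)) (at x)" for x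
    unfolding s_def using pos[of x] by (auto intro!: derivative_eq_intros df' simp: divide_simps)
  have df_s: "(f has_real_derivative s x * s x) (at x)" for x using df s_sq by simp
  have f''': "f''' x = s x ^ 2 * (3/2 * (f'' x / s x ^ 2)\<^sup>2 - 1/2 * ((s x ^ 2)\<^sup>2 - 1))" for x
  proof -
    have "f''' x / f' x = 3/2 * (f'' x / f' x)\<^sup>2 - 1/2 * ((f' x)\<^sup>2 - 1)"
      using schwarzian[of x] by simp
    then have "f''' x = f' x * (3/2 * (f'' x / f' x)\<^sup>2 - 1/2 * ((f' x)\<^sup>2 - 1))"
      using pos[of x] by (simp add: divide_eq_eq mult.commute)
    moreover have "s x ^ 2 = f' x" using s_sq[of x] by (simp add: power2_eq_square)
    ultimately show ?thesis by simp
  qed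
  have u_eq: "u = (\<lambda>x. cos (f x / 2 - \<theta>) / s x)"
    and u'_eq: "u' = (\<lambda>x. - f'' x * cos (f x / 2 - \<theta>) / (2 * s x ^ 3) - s x * sin (f x / 2 - \<theta>) / 2)"
    by (simp_all add: u_def u'_def s_def)
  show "(u has_real_derivative u' x) (at x)"
    unfolding u_eq u'_eq using s_pos[of x]
    by (auto intro!: derivative_eq_intros df_s ds simp: field_simps power3_eq_cube)
  show "(u' has_real_derivative - (1/4) * u x) (at x)"
    unfolding u_eq u'_eq
    apply (auto intro!: derivative_eq_intros df_s ds df'')
    using s_pos[of x] apply simp
    unfolding f''' using s_pos[of x] apply (simp add: field_simps power2_eq_square power3_eq_cube)
    apply algebra
    done
qed

lemma schwarzian_equation_half_angle_solution:
  fixes f f' f'' f''' :: "real \<Rightarrow> real"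
  assumes "\<And>x. (f has_real_derivative f' x) (at x)"
    and "\<And>x. (f' has_real_derivative f'' x) (at x)"
    and "\<And>x. (f'' has_real_derivative f''' x) (at x)"
    and pos: "\<And>x. f' x > 0"
    and "\<And>x. f''' x / f' x - 3/2 * (f'' x / f' x)\<^sup>2 + 1/2 * ((f' x)\<^sup>2 - 1) = 0"
  shows "\<exists>a b c d. a * d - b * c = 1 \<and> (\<forall>x.
           cos (f x / 2) = sqrt (f' x) * (a * cos (x / 2) + b * sin (x / 2)) \<and>
           sin (f x / 2) = sqrt (f' x) * (c * cos (x / 2) + d * sin (x / 2)))"
proof -
  define u where "u \<theta> x = cos (f x / 2 - \<theta>) / sqrt (f' x)" for \<theta> x
  define u' where "u' \<theta> x = - f'' x * cos (f x / 2 - \<theta>) / (2 * sqrt (f' x) ^ 3)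
    - sqrt (f' x) * sin (f x / 2 - \<theta>) / 2" for \<theta> x
  have du: "(u \<theta> has_real_derivative u' \<theta> x) (at x)"
    and du': "(u' \<theta> has_real_derivative - (1/4) * u \<theta> x) (at x)" for \<theta> x
    using schwarzian_equation_half_angle_oscillator[OF assms, of \<theta> x]
    by (simp_all add: u_def[abs_def] u'_def[abs_def])
  have solution: "u \<theta> x = u \<theta> 0 * cos (x / 2) + 2 * u' \<theta> 0 * sin (x / 2)" for \<theta> x
  proof -
    have "u \<theta> x - (u \<theta> 0 * cos (x / 2) + 2 * u' \<theta> 0 * sin (x / 2)) = 0"
      by (rule harmonic_oscillator_zero[where k = "1/4"
            and y' = "\<lambda>x. u' \<theta> x - (- u \<theta> 0 / 2 * sin (x / 2) + u' \<theta> 0 * cos (x / 2))"])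
        (auto intro!: derivative_eq_intros du du' simp: algebra_simps)
    then show ?thesis by simp
  qed
  have wronskian: "u 0 0 * (2 * u' (pi / 2) 0) - 2 * u' 0 0 * u (pi / 2) 0 = 1"
  proof -
    have "C / t * (- F * S / (2 * t ^ 3) + t * C / 2) - (- F * C / (2 * t ^ 3) - t * S / 2) * (S / t)
        = (C\<^sup>2 + S\<^sup>2) / 2" if "t > 0" for C S F t :: real
      using that by (simp add: field_simps power2_eq_square power3_eq_cube)
    from this[of "sqrt (f' 0)" "cos (f 0 / 2)" "sin (f 0 / 2)" "f'' 0"] show ?thesis
      using pos[of 0] by (simp add: u_def u'_def cos_diff sin_diff algebra_simps)
  qed
  moreover have "cos (f x / 2) = sqrt (f' x) * (u 0 0 * cos (x / 2) + 2 * u' 0 0 * sin (x / 2))"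
    "sin (f x / 2) = sqrt (f' x) * (u (pi / 2) 0 * cos (x / 2) + 2 * u' (pi / 2) 0 * sin (x / 2))" for x
    unfolding solution[of 0 x, symmetric] solution[of "pi / 2" x, symmetric]
    using pos[of x] by (simp_all add: u_def cos_diff)
  ultimately show ?thesis by blast
qed

lemma ker_S_c_imp_mobius_lift:
  assumes "k \<noteq> 0" and "f \<in> ker_S_c k"
  shows "\<exists>a b c d. a * d - b * c = 1 \<and> mobius_lift a b c d f"
proof -
  have f: "f \<in> carrier DiffT" and "\<And>x. S_c k f x = 0" using assms(2) by (auto simp: ker_S_c_def)
  then have "(deriv ^^ 3) f x / deriv f x - 3/2 * ((deriv ^^ 2) f x / deriv f x)\<^sup>2
      + 1/2 * ((deriv f x)\<^sup>2 - 1) = 0" for x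
    using assms(1) by (simp add: S_c_def)
  from schwarzian_equation_half_angle_solution[OF DiffT_carrier_has_derivatives[OF f]
      DiffT_carrierD(1)[OF f] this]
  show ?thesis
    using DiffT_carrierD(1)[OF f] DiffT_carrier_differentiable[OF f] by (auto simp: mobius_lift_def)
qed

lemma DiffT_carrier_mono:
  assumes "f \<in> carrier DiffT" and "x < y"
  shows "f x < f y"
  using assms(2)
proof (rule DERIV_pos_imp_increasing)
  show "\<exists>y. (f has_real_derivative y) (at t) \<and> 0 < y" for t
    using DiffT_carrier_has_derivatives(1)[OF assms(1)] DiffT_carrierD(1)[OF assms(1)] by blast
qed

lemma DiffT_carrier_deriv_periodic:
  assumes "f \<in> carrier DiffT"
  shows "deriv f (x + 2 * pi) = deriv f x"
proof -
  have "((\<lambda>t. f (t + 2 * pi)) has_real_derivative deriv f (x + 2 * pi)) (at x)"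
    using DiffT_carrier_has_derivatives(1)[OF assms, of "x + 2 * pi"] DERIV_shift by blast
  moreover have "(\<lambda>t. f (t + 2 * pi)) = (\<lambda>t. f t + 2 * pi)"
    using DiffT_carrierD(2)[OF assms] by auto
  moreover have "((\<lambda>t. f t + 2 * pi) has_real_derivative deriv f x) (at x)"
    using DiffT_carrier_has_derivatives(1)[OF assms, of x] by (auto intro!: derivative_eq_intros)
  ultimately show ?thesis using DERIV_unique by metis
qed

lemma antiperiodic_eq_zero:
  fixes g :: "real \<Rightarrow> real"
  assumes "T > 0" and antiper: "\<And>x. g (x + T) = - g x" and zero: "\<And>x. 0 \<le> x \<Longrightarrow> x < T \<Longrightarrow> g x = 0"
  shows "g x = 0"
proof -
  have shift: "g (y + T * real n) = 0 \<longleftrightarrow> g y = 0" for n :: nat and y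
  proof (induction n)
    case (Suc n)
    have "g (y + T * real (Suc n)) = - g (y + T * real n)"
      using antiper[of "y + T * real n"] by (simp add: algebra_simps)
    then show ?case using Suc by simp
  qed simp
  define m where "m = \<lfloor>x / T\<rfloor>"
  have "of_int m \<le> x / T" "x / T < of_int m + 1" unfolding m_def by linarith+
  then have "0 \<le> x - T * of_int m" "x - T * of_int m < T"
    using assms(1) by (simp_all add: field_simps)
  then have "g (x - T * of_int m) = 0" by (rule zero)
  then show ?thesis
    using shift[of "x - T * of_int m" "nat m"] shift[of x "nat (- m)"]
    by (cases "m \<ge> 0") simp_all
qed

lemma sin_half_cross_det_imp_linear:
  fixes u w :: "real \<Rightarrow> real"
  assumes cross: "\<And>x y. u x * w y - w x * u y = sin ((y - x) / 2)"
  shows "\<exists>a b c d. a * d - b * c = 1 \<and>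
           (\<forall>y. u y = a * cos (y / 2) + b * sin (y / 2) \<and> w y = c * cos (y / 2) + d * sin (y / 2))"
proof (intro exI conjI allI)
  have "sin ((y - pi) / 2) = - cos (y / 2)" for y
    using sin_diff[of "y / 2" "pi / 2"] by (simp add: diff_divide_distrib)
  then have at_0: "u 0 * w y - w 0 * u y = sin (y / 2)"
    and at_pi: "u pi * w y - w pi * u y = - cos (y / 2)" for y
    using cross[of 0 y] cross[of pi y] by simp_all
  show det: "u 0 * w pi - u pi * w 0 = 1" using at_0[of pi] by (simp add: mult.commute)
  fix y
  have "u y = (u 0 * w pi - u pi * w 0) * u y" using det by simp
  also have "\<dots> = u pi * (u 0 * w y - w 0 * u y) - u 0 * (u pi * w y - w pi * u y)"
    by (simp add: algebra_simps)
  finally show "u y = u 0 * cos (y / 2) + u pi * sin (y / 2)" unfolding at_0 at_pi by simp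
  have "w y = (u 0 * w pi - u pi * w 0) * w y" using det by simp
  also have "\<dots> = w pi * (u 0 * w y - w 0 * u y) - w 0 * (u pi * w y - w pi * u y)"
    by (simp add: algebra_simps)
  finally show "w y = w 0 * cos (y / 2) + w pi * sin (y / 2)" unfolding at_0 at_pi by simp
qed

text \<open>The isometry condition only determines the square of sin ((f y - f x) / 2). The signs agree
  for 0 < y - x < 2 pi because f is increasing with f (x + 2 pi) = f x + 2 pi, and both sides change
  sign when y is shifted by 2 pi.\<close>

lemma isom_plus_sin_half_diff:
  assumes "k \<noteq> 0" and "f \<in> isom_plus k"
  shows "sin ((f y - f x) / 2) = sqrt (deriv f x) * sqrt (deriv f y) * sin ((y - x) / 2)"
proof -
  have f: "f \<in> carrier DiffT"
    and isom: "\<And>x y. sin ((x - y) / 2) \<noteq> 0 \<Longrightarrow>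
                 (sin ((f x - f y) / 2))\<^sup>2 = deriv f x * deriv f y * (sin ((x - y) / 2))\<^sup>2"
    using assms by (auto simp: isom_plus_iff)
  note pos = DiffT_carrierD(1)[OF f]
  define g where
    "g = (\<lambda>t. sin ((f (x + t) - f x) / 2) - sqrt (deriv f x) * sqrt (deriv f (x + t)) * sin (t / 2))"
  have "g t = 0" if "0 < t" "t < 2 * pi" for t
  proof -
    have sin_pos: "sin (t / 2) > 0" using that by (intro sin_gt_zero) auto
    have "f x < f (x + t)" "f (x + t) < f (x + 2 * pi)"
      using that by (auto intro: DiffT_carrier_mono[OF f])
    then have "sin ((f (x + t) - f x) / 2) > 0" using DiffT_carrierD(2)[OF f, of x]
      by (intro sin_gt_zero) auto
    moreover have "(sin ((f (x + t) - f x) / 2))\<^sup>2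
        = (sqrt (deriv f x) * sqrt (deriv f (x + t)) * sin (t / 2))\<^sup>2"
      using isom[of "x + t" x] sin_pos pos[of x] pos[of "x + t"]
      by (simp add: power_mult_distrib less_imp_le)
    ultimately show ?thesis using sin_pos pos[of x] pos[of "x + t"] unfolding g_def
      by (subst (asm) power2_eq_iff_nonneg) (auto simp: less_imp_le)
  qed
  then have zero: "g t = 0" if "0 \<le> t" "t < 2 * pi" for t
    using that by (cases "t = 0") (auto simp: g_def)
  have antiper: "g (t + 2 * pi) = - g t" for t
  proof -
    have "f (x + (t + 2 * pi)) = f (x + t) + 2 * pi"
      using DiffT_carrierD(2)[OF f, of "x + t"] by (simp add: add.assoc)
    then have "(f (x + (t + 2 * pi)) - f x) / 2 = (f (x + t) - f x) / 2 + pi" by simp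
    then have "sin ((f (x + (t + 2 * pi)) - f x) / 2) = - sin ((f (x + t) - f x) / 2)"
      by (simp only: sin_periodic_pi)
    moreover have "deriv f (x + (t + 2 * pi)) = deriv f (x + t)"
      using DiffT_carrier_deriv_periodic[OF f, of "x + t"] by (simp add: add.assoc)
    moreover have "sin ((t + 2 * pi) / 2) = - sin (t / 2)"
      using sin_periodic_pi[of "t / 2"] by (simp add: add_divide_distrib)
    ultimately show ?thesis by (simp add: g_def)
  qed
  have "g (y - x) = 0" by (rule antiperiodic_eq_zero[of "2 * pi" g]) (simp_all add: zero antiper)
  then show ?thesis by (simp add: g_def)
qed

lemma isom_plus_imp_mobius_lift:
  assumes "k \<noteq> 0" and "f \<in> isom_plus k"
  shows "\<exists>a b c d. a * d - b * c = 1 \<and> mobius_lift a b c d f"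
proof -
  have f: "f \<in> carrier DiffT" using assms by (simp add: isom_plus_iff)
  define s where "s = (\<lambda>x. sqrt (deriv f x))"
  have s_pos: "s x > 0" for x using DiffT_carrierD(1)[OF f] by (simp add: s_def)
  define u where "u = (\<lambda>x. cos (f x / 2) / s x)"
  define w where "w = (\<lambda>x. sin (f x / 2) / s x)"
  have "u x * w y - w x * u y = sin ((y - x) / 2)" for x y
  proof -
    have "u x * w y - w x * u y = sin (f y / 2 - f x / 2) / (s x * s y)"
      unfolding u_def w_def sin_diff using s_pos[of x] s_pos[of y] by (simp add: field_simps)
    also have "\<dots> = sin ((y - x) / 2)"
      using isom_plus_sin_half_diff[OF assms, of y x] s_pos[of x] s_pos[of y]
      by (simp add: diff_divide_distrib s_def)
    finally show ?thesis .
  qed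
  then obtain a b c d where "a * d - b * c = 1"
    and "\<forall>y. u y = a * cos (y / 2) + b * sin (y / 2) \<and> w y = c * cos (y / 2) + d * sin (y / 2)"
    using sin_half_cross_det_imp_linear by blast
  moreover have "cos (f x / 2) = s x * u x" "sin (f x / 2) = s x * w x" for x
    using s_pos[of x] by (simp_all add: u_def w_def)
  ultimately show ?thesis
    using DiffT_carrierD(1)[OF f] DiffT_carrier_differentiable[OF f]
    by (auto simp: mobius_lift_def s_def)
qed

definition mobius_lifts :: "(real \<Rightarrow> real) set" where
  "mobius_lifts = {f \<in> carrier DiffT. \<exists>a b c d. a * d - b * c = 1 \<and> mobius_lift a b c d f}"

lemma isom_plus_eq_mobius_lifts:
  assumes "k \<noteq> 0"
  shows "isom_plus k = mobius_lifts"
proof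
  show "isom_plus k \<subseteq> mobius_lifts"
    using isom_plus_imp_mobius_lift[OF assms] isom_plus_iff[OF assms] by (auto simp: mobius_lifts_def)
  show "mobius_lifts \<subseteq> isom_plus k"
    using mobius_lift_in_isom_plus[OF assms] by (auto simp: mobius_lifts_def)
qed

lemma ker_S_c_eq_mobius_lifts:
  assumes "k \<noteq> 0"
  shows "ker_S_c k = mobius_lifts"
proof
  show "ker_S_c k \<subseteq> mobius_lifts"
    using ker_S_c_imp_mobius_lift[OF assms] by (auto simp: mobius_lifts_def ker_S_c_def)
  show "mobius_lifts \<subseteq> ker_S_c k"
    using mobius_lift_in_ker_S_c by (auto simp: mobius_lifts_def)
qed

lemma mobius_lift_comp:
  assumes f: "mobius_lift a b c d f" and g: "mobius_lift a' b' c' d' g"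
  shows "mobius_lift (a * a' + b * c') (a * b' + b * d') (c * a' + d * c') (c * b' + d * d') (f \<circ> g)"
proof -
  have df: "(f has_real_derivative deriv f x) (at x)" and dg: "(g has_real_derivative deriv g x) (at x)"
    and pos: "deriv f x > 0" "deriv g x > 0" for x
    using f g unfolding mobius_lift_def by (auto simp: DERIV_deriv_iff_real_differentiable)
  have d_comp: "((f \<circ> g) has_real_derivative deriv f (g x) * deriv g x) (at x)" for x
    using DERIV_chain[OF df dg] .
  then have deriv_comp: "deriv (f \<circ> g) x = deriv f (g x) * deriv g x" for x
    by (rule DERIV_imp_deriv)
  have sqrt_comp: "sqrt (deriv (f \<circ> g) x) = sqrt (deriv f (g x)) * sqrt (deriv g x)" for x
    unfolding deriv_comp by (simp add: real_sqrt_mult)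
  show ?thesis
    unfolding mobius_lift_def
  proof (intro conjI allI)
    fix x
    show "(f \<circ> g) differentiable at x" using d_comp real_differentiable_def by blast
    show "0 < deriv (f \<circ> g) x" unfolding deriv_comp using pos by simp
    have "cos (f (g x) / 2) = sqrt (deriv f (g x)) * (a * cos (g x / 2) + b * sin (g x / 2))"
      "sin (f (g x) / 2) = sqrt (deriv f (g x)) * (c * cos (g x / 2) + d * sin (g x / 2))"
      "cos (g x / 2) = sqrt (deriv g x) * (a' * cos (x / 2) + b' * sin (x / 2))"
      "sin (g x / 2) = sqrt (deriv g x) * (c' * cos (x / 2) + d' * sin (x / 2))"
      using f g unfolding mobius_lift_def by blast+
    then show "cos ((f \<circ> g) x / 2) = sqrt (deriv (f \<circ> g) x) *
        ((a * a' + b * c') * cos (x / 2) + (a * b' + b * d') * sin (x / 2))"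
      and "sin ((f \<circ> g) x / 2) = sqrt (deriv (f \<circ> g) x) *
        ((c * a' + d * c') * cos (x / 2) + (c * b' + d * d') * sin (x / 2))"
      unfolding sqrt_comp by (simp_all add: algebra_simps)
  qed
qed

lemma mobius_lift_matrix_unique:
  assumes "mobius_lift a b c d f" and "mobius_lift a' b' c' d' f"
  shows "a = a' \<and> b = b' \<and> c = c' \<and> d = d'"
proof -
  have pos: "deriv f x > 0" for x using assms(1) by (simp add: mobius_lift_def)
  have "sqrt (deriv f x) \<noteq> 0" for x using pos[of x] by simp
  then have "a * cos (x / 2) + b * sin (x / 2) = a' * cos (x / 2) + b' * sin (x / 2)"
    "c * cos (x / 2) + d * sin (x / 2) = c' * cos (x / 2) + d' * sin (x / 2)" for x
    using assms unfolding mobius_lift_def by (metis mult_cancel_left)+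
  from this[of 0] this[of pi] show ?thesis by simp
qed

text \<open>A lift determines its matrix only up to sign, i.e. as an element of PSL(2,R):
  shifting the lift by 2 pi changes the sign of the matrix.\<close>

definition proj_mobius_lift :: "real \<Rightarrow> real \<Rightarrow> real \<Rightarrow> real \<Rightarrow> (real \<Rightarrow> real) \<Rightarrow> bool" where
  "proj_mobius_lift a b c d f \<longleftrightarrow> mobius_lift a b c d f \<or> mobius_lift (- a) (- b) (- c) (- d) f"

lemma proj_mobius_lift_neg_iff:
  "proj_mobius_lift (- a) (- b) (- c) (- d) f \<longleftrightarrow> proj_mobius_lift a b c d f"
  by (auto simp: proj_mobius_lift_def)

lemma proj_mobius_lift_comp:
  assumes "proj_mobius_lift a b c d f" and "proj_mobius_lift a' b' c' d' g"
  shows "proj_mobius_lift (a * a' + b * c') (a * b' + b * d') (c * a' + d * c') (c * b' + d * d')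
           (f \<circ> g)"
  using assms mobius_lift_comp[of a b c d f a' b' c' d' g]
    mobius_lift_comp[of "- a" "- b" "- c" "- d" f a' b' c' d' g]
    mobius_lift_comp[of a b c d f "- a'" "- b'" "- c'" "- d'" g]
    mobius_lift_comp[of "- a" "- b" "- c" "- d" f "- a'" "- b'" "- c'" "- d'" g]
  unfolding proj_mobius_lift_def by auto

lemma proj_mobius_lift_matrix_unique:
  assumes "proj_mobius_lift a b c d f" and "proj_mobius_lift a' b' c' d' f"
  shows "(a' = a \<and> b' = b \<and> c' = c \<and> d' = d) \<or> (a' = - a \<and> b' = - b \<and> c' = - c \<and> d' = - d)"
proof -
  have "mobius_lift a b c d f \<or> mobius_lift (- a) (- b) (- c) (- d) f"
    and "mobius_lift a' b' c' d' f \<or> mobius_lift (- a') (- b') (- c') (- d') f"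
    using assms by (simp_all add: proj_mobius_lift_def)
  then show ?thesis
    by (elim disjE) (drule (1) mobius_lift_matrix_unique, simp)+
qed

lemma mobius_lift_shift:
  fixes m :: int
  assumes "mobius_lift a b c d f"
  shows "proj_mobius_lift a b c d (\<lambda>x. f x - 2 * pi * of_int m)"
proof -
  have "((\<lambda>x. f x - 2 * pi * of_int m) has_real_derivative deriv f x) (at x)" for x
    using assms unfolding mobius_lift_def
    by (auto intro!: derivative_eq_intros simp: DERIV_deriv_iff_real_differentiable)
  then have "deriv (\<lambda>x. f x - 2 * pi * of_int m) = deriv f"
    and "(\<lambda>x. f x - 2 * pi * of_int m) differentiable at x" for x
    using DERIV_imp_deriv real_differentiable_def by blast+
  moreover have "cos ((f x - 2 * pi * of_int m) / 2) = (if even m then 1 else - 1) * cos (f x / 2)"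
    "sin ((f x - 2 * pi * of_int m) / 2) = (if even m then 1 else - 1) * sin (f x / 2)" for x
  proof -
    have "(f x - 2 * pi * of_int m) / 2 = f x / 2 - pi * of_int m" by (simp add: field_simps)
    then show "cos ((f x - 2 * pi * of_int m) / 2) = (if even m then 1 else - 1) * cos (f x / 2)"
      "sin ((f x - 2 * pi * of_int m) / 2) = (if even m then 1 else - 1) * sin (f x / 2)"
      by (simp_all only: cos_diff sin_diff cos_npi_int sin_npi_int) simp_all
  qed
  ultimately show ?thesis
    using assms unfolding proj_mobius_lift_def mobius_lift_def
    by (cases "even m") (simp_all add: algebra_simps)
qed

lemma normalize_lift_range: "0 \<le> normalize_lift f 0" "normalize_lift f 0 < 2 * pi"
proof -
  define q where "q = f 0 / (2 * pi)"
  have "normalize_lift f 0 = 2 * pi * (q - of_int \<lfloor>q\<rfloor>)"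
    by (simp add: normalize_lift_def q_def right_diff_distrib)
  moreover have "0 \<le> q - of_int \<lfloor>q\<rfloor>" "q - of_int \<lfloor>q\<rfloor> < 1" by linarith+
  ultimately show "0 \<le> normalize_lift f 0" "normalize_lift f 0 < 2 * pi" by simp_all
qed

lemma proj_mobius_lift_normalize:
  "proj_mobius_lift a b c d f \<Longrightarrow> proj_mobius_lift a b c d (normalize_lift f)"
  using mobius_lift_shift[of a b c d f] mobius_lift_shift[of "- a" "- b" "- c" "- d" f]
  unfolding proj_mobius_lift_def[of a b c d f] normalize_lift_def
  by (metis proj_mobius_lift_neg_iff)

lemma normalize_lift_in_carrier:
  assumes "proj_mobius_lift a b c d f" and "\<And>x. f (x + 2 * pi) = f x + 2 * pi"
  shows "normalize_lift f \<in> carrier DiffT"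
  using proj_mobius_lift_normalize[OF assms(1)] assms(2) normalize_lift_range
    carrier_DiffT_if_mobius_lift[of _ _ _ _ "normalize_lift f"]
  unfolding proj_mobius_lift_def by (auto simp: normalize_lift_def)

lemma mobius_lift_unique:
  assumes f: "mobius_lift a b c d f" and g: "proj_mobius_lift a b c d g"
    and "0 \<le> f 0" "f 0 < 2 * pi" "0 \<le> g 0" "g 0 < 2 * pi"
  shows "f = g"
proof -
  have g': "mobius_lift a b c d g \<or> mobius_lift (- a) (- b) (- c) (- d) g"
    using g by (simp add: proj_mobius_lift_def)
  have "mobius_denom (- a) (- b) (- c) (- d) x = mobius_denom a b c d x" for x
    by (simp add: mobius_denom_def power2_eq_square algebra_simps)
  then have deriv_eq: "deriv g x = deriv f x" for x
    using g' deriv_mobius_lift[OF f] deriv_mobius_lift[of _ _ _ _ g] by metis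
  have "(f has_real_derivative deriv f x) (at x)" "(g has_real_derivative deriv g x) (at x)" for x
    using f g' unfolding mobius_lift_def by (auto simp: DERIV_deriv_iff_real_differentiable)
  then have "((\<lambda>x. f x - g x) has_real_derivative 0) (at x)" for x
    using deriv_eq[of x] by (auto intro!: derivative_eq_intros)
  then have const: "f x - g x = f 0 - g 0" for x using DERIV_isconst_all[of "\<lambda>x. f x - g x" x 0] by simp
  have range: "0 \<le> f 0 / 2" "f 0 / 2 < pi" "0 \<le> g 0 / 2" "g 0 / 2 < pi"
    using assms(3-6) by simp_all
  have cos_f: "cos (f 0 / 2) = sqrt (deriv f 0) * a" and sin_f: "sin (f 0 / 2) = sqrt (deriv f 0) * c"
    using f by (simp_all add: mobius_lift_def)
  have "f 0 = g 0"
    using g'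
  proof
    assume "mobius_lift a b c d g"
    then have "cos (g 0 / 2) = cos (f 0 / 2)" using cos_f deriv_eq by (simp add: mobius_lift_def)
    then show ?thesis using cos_inj_pi[of "f 0 / 2" "g 0 / 2"] range by simp
  next
    assume "mobius_lift (- a) (- b) (- c) (- d) g"
    then have "sin (g 0 / 2) = - sin (f 0 / 2)" using sin_f deriv_eq by (simp add: mobius_lift_def)
    moreover have "sin (f 0 / 2) \<ge> 0" "sin (g 0 / 2) \<ge> 0" using range by (simp_all add: sin_ge_zero)
    ultimately have "sin (f 0 / 2) = 0" "sin (g 0 / 2) = 0" by linarith+
    then have "f 0 / 2 = 0" "g 0 / 2 = 0" using range sin_gt_zero by (metis less_le less_irrefl)+
    then show ?thesis by simp
  qed
  then show ?thesis using const by (auto simp: fun_eq_iff)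
qed

lemma proj_mobius_lift_unique:
  assumes "proj_mobius_lift a b c d f" and "proj_mobius_lift a b c d g"
    and "0 \<le> f 0" "f 0 < 2 * pi" "0 \<le> g 0" "g 0 < 2 * pi"
  shows "f = g"
  using assms mobius_lift_unique[of a b c d f g] mobius_lift_unique[of "- a" "- b" "- c" "- d" f g]
  unfolding proj_mobius_lift_def[of a b c d f] by (auto simp: proj_mobius_lift_neg_iff)

section \<open>Every matrix in SL(2,R) has a lift\<close>

definition angle_cos_form :: "real \<Rightarrow> real \<Rightarrow> real \<Rightarrow> real \<Rightarrow> real \<Rightarrow> real" where
  "angle_cos_form p q r w t = p * (cos t)\<^sup>2 + (q + r) * cos t * sin t + w * (sin t)\<^sup>2"

definition angle_sin_form :: "real \<Rightarrow> real \<Rightarrow> real \<Rightarrow> real \<Rightarrow> real \<Rightarrow> real" where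
  "angle_sin_form p q r w t = r * (cos t)\<^sup>2 + (w - p) * cos t * sin t - q * (sin t)\<^sup>2"

text \<open>With v = (cos t, sin t) and A = ((p, q), (r, w)), these are the components of A v along v
  and along v rotated by pi/2. Where the first is positive, arctan of their quotient is a continuous
  choice of the angle from v to A v, so x/2 plus that angle at t = x/2 is half a lift of the Moebius
  map of A.\<close>

definition arctan_lift :: "real \<Rightarrow> real \<Rightarrow> real \<Rightarrow> real \<Rightarrow> real \<Rightarrow> real" where
  "arctan_lift p q r w x
     = x + 2 * arctan (angle_sin_form p q r w (x / 2) / angle_cos_form p q r w (x / 2))"

lemma angle_forms_eqs:
  fixes C S :: real
  assumes "C\<^sup>2 + S\<^sup>2 = 1"
  shows "(p * C\<^sup>2 + (q + r) * C * S + w * S\<^sup>2)\<^sup>2 + (r * C\<^sup>2 + (w - p) * C * S - q * S\<^sup>2)\<^sup>2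
      = (p * C + q * S)\<^sup>2 + (r * C + w * S)\<^sup>2"
    and "(p * C\<^sup>2 + (q + r) * C * S + w * S\<^sup>2) * C - (r * C\<^sup>2 + (w - p) * C * S - q * S\<^sup>2) * S
           = p * C + q * S"
    and "(p * C\<^sup>2 + (q + r) * C * S + w * S\<^sup>2) * S + (r * C\<^sup>2 + (w - p) * C * S - q * S\<^sup>2) * C
           = r * C + w * S"
  using assms by algebra+

lemma angle_forms_wronskian:
  fixes C S :: real
  assumes "C\<^sup>2 + S\<^sup>2 = 1" and "p * w - q * r = 1"
  shows "(- 2 * r * C * S + (w - p) * (C\<^sup>2 - S\<^sup>2) - 2 * q * C * S) * (p * C\<^sup>2 + (q + r) * C * S + w * S\<^sup>2)
     - (r * C\<^sup>2 + (w - p) * C * S - q * S\<^sup>2) * (- 2 * p * C * S + (q + r) * (C\<^sup>2 - S\<^sup>2) + 2 * w * C * S)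
     = 1 - (p * C\<^sup>2 + (q + r) * C * S + w * S\<^sup>2)\<^sup>2 - (r * C\<^sup>2 + (w - p) * C * S - q * S\<^sup>2)\<^sup>2"
  using assms by algebra

lemma angle_cos_form_has_real_derivative:
  "(angle_cos_form p q r w has_real_derivative
     - 2 * p * cos t * sin t + (q + r) * ((cos t)\<^sup>2 - (sin t)\<^sup>2) + 2 * w * cos t * sin t) (at t)"
  unfolding angle_cos_form_def
  by (auto intro!: derivative_eq_intros) (simp add: power2_eq_square algebra_simps)

lemma angle_sin_form_has_real_derivative:
  "(angle_sin_form p q r w has_real_derivative
     - 2 * r * cos t * sin t + (w - p) * ((cos t)\<^sup>2 - (sin t)\<^sup>2) - 2 * q * cos t * sin t) (at t)"
  unfolding angle_sin_form_def
  by (auto intro!: derivative_eq_intros) (simp add: power2_eq_square algebra_simps)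

lemma arctan_lift_has_real_derivative:
  assumes det: "p * w - q * r = 1" and pos: "\<And>t. angle_cos_form p q r w t > 0"
  shows "(arctan_lift p q r w has_real_derivative 1 / mobius_denom p q r w x) (at x)"
proof -
  let ?M = "\<lambda>x. angle_cos_form p q r w (x / 2)" and ?N = "\<lambda>x. angle_sin_form p q r w (x / 2)"
  let ?M' = "- 2 * p * cos (x / 2) * sin (x / 2) + (q + r) * ((cos (x / 2))\<^sup>2 - (sin (x / 2))\<^sup>2)
    + 2 * w * cos (x / 2) * sin (x / 2)"
  let ?N' = "- 2 * r * cos (x / 2) * sin (x / 2) + (w - p) * ((cos (x / 2))\<^sup>2 - (sin (x / 2))\<^sup>2)
    - 2 * q * cos (x / 2) * sin (x / 2)"
  have half: "((\<lambda>x. x / 2) has_real_derivative 1 / 2) (at x)" by (auto intro!: derivative_eq_intros)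
  have dM: "(?M has_real_derivative ?M' / 2) (at x)"
    using DERIV_chain2[OF angle_cos_form_has_real_derivative half] by simp
  have dN: "(?N has_real_derivative ?N' / 2) (at x)"
    using DERIV_chain2[OF angle_sin_form_has_real_derivative half] by simp
  have M_pos: "?M x > 0" using pos by simp
  have cs: "(cos (x / 2))\<^sup>2 + (sin (x / 2))\<^sup>2 = 1" by simp
  have denom: "(?M x)\<^sup>2 + (?N x)\<^sup>2 = mobius_denom p q r w x"
    unfolding angle_cos_form_def angle_sin_form_def mobius_denom_def
    using angle_forms_eqs(1)[OF cs] .
  have wronskian: "?N' * ?M x - ?N x * ?M' = 1 - mobius_denom p q r w x"
    unfolding denom[symmetric] unfolding angle_cos_form_def angle_sin_form_def
    using angle_forms_wronskian[OF cs det] by linarith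
  have "inverse (1 + (N / M)\<^sup>2) * (N' * M / 2 - N * M' / 2) * 2 / (M * M) = (N' * M - N * M') / (M\<^sup>2 + N\<^sup>2)"
    if "M > 0" for M N M' N' :: real
  proof -
    have "inverse (1 + (N / M)\<^sup>2) = M\<^sup>2 / (M\<^sup>2 + N\<^sup>2)" using that by (simp add: field_simps power2_eq_square)
    then have "inverse (1 + (N / M)\<^sup>2) * (N' * M / 2 - N * M' / 2) * 2 / (M * M)
        = M\<^sup>2 / (M\<^sup>2 + N\<^sup>2) * (N' * M - N * M') / (M * M)"
      by (simp add: algebra_simps)
    also have "\<dots> = (N' * M - N * M') / (M\<^sup>2 + N\<^sup>2)" using that by (simp add: power2_eq_square)
    finally show ?thesis .
  qed
  then have "(arctan_lift p q r w has_real_derivative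
      1 + (?N' * ?M x - ?N x * ?M') / ((?M x)\<^sup>2 + (?N x)\<^sup>2)) (at x)"
    unfolding arctan_lift_def using M_pos
    by (auto intro!: derivative_eq_intros dM dN)
  moreover have "mobius_denom p q r w x > 0" using mobius_denom_pos[of p w q r] det by simp
  ultimately show ?thesis unfolding wronskian denom by (simp add: field_simps)
qed

lemma mobius_lift_arctan_lift:
  assumes det: "p * w - q * r = 1" and pos: "\<And>t. angle_cos_form p q r w t > 0"
  shows "mobius_lift p q r w (arctan_lift p q r w)"
    and "arctan_lift p q r w (x + 2 * pi) = arctan_lift p q r w x + 2 * pi"
proof -
  note d = arctan_lift_has_real_derivative[OF det pos]
  have denom_pos: "mobius_denom p q r w x > 0" for x using mobius_denom_pos[of p w q r] det by simp
  have "cos (arctan_lift p q r w x / 2)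
        = sqrt (1 / mobius_denom p q r w x) * (p * cos (x / 2) + q * sin (x / 2))
      \<and> sin (arctan_lift p q r w x / 2)
        = sqrt (1 / mobius_denom p q r w x) * (r * cos (x / 2) + w * sin (x / 2))" for x
  proof -
    define M where "M = angle_cos_form p q r w (x / 2)"
    define N where "N = angle_sin_form p q r w (x / 2)"
    have M_pos: "M > 0" using pos by (simp add: M_def)
    have cs: "(cos (x / 2))\<^sup>2 + (sin (x / 2))\<^sup>2 = 1" by simp
    have denom: "mobius_denom p q r w x = M\<^sup>2 + N\<^sup>2"
      unfolding M_def N_def angle_cos_form_def angle_sin_form_def mobius_denom_def
      using angle_forms_eqs(1)[OF cs] by simp
    have root: "sqrt (1 + (N / M)\<^sup>2) = sqrt (M\<^sup>2 + N\<^sup>2) / M"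
      using M_pos by (simp add: field_simps real_sqrt_divide)
    have half: "arctan_lift p q r w x / 2 = x / 2 + arctan (N / M)"
      by (simp add: arctan_lift_def M_def N_def)
    have "sqrt (M\<^sup>2 + N\<^sup>2) > 0" using denom denom_pos[of x] by simp
    moreover have "M * cos (x / 2) - N * sin (x / 2) = p * cos (x / 2) + q * sin (x / 2)"
      "M * sin (x / 2) + N * cos (x / 2) = r * cos (x / 2) + w * sin (x / 2)"
      unfolding M_def N_def angle_cos_form_def angle_sin_form_def
      using angle_forms_eqs(2,3)[OF cs] by (simp_all add: algebra_simps)
    ultimately show ?thesis
      unfolding half cos_add sin_add cos_arctan sin_arctan root denom using M_pos
      by (simp add: field_simps real_sqrt_divide)
  qed
  then show "mobius_lift p q r w (arctan_lift p q r w)"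
    unfolding mobius_lift_def using d DERIV_imp_deriv[OF d] denom_pos real_differentiable_def by auto
  have half_shift: "(x + 2 * pi) / 2 = x / 2 + pi" by simp
  show "arctan_lift p q r w (x + 2 * pi) = arctan_lift p q r w x + 2 * pi"
    unfolding arctan_lift_def angle_cos_form_def angle_sin_form_def half_shift by simp
qed

lemma angle_cos_form_pos:
  assumes det: "p * w - q * q = 1" and trace: "p + w > 0"
  shows "angle_cos_form p q q w t > 0"
proof -
  have "p > 0"
  proof (rule ccontr)
    assume "\<not> p > 0"
    then have "p * w \<le> 0" using trace by (simp add: mult_nonpos_nonneg)
    then show False using det zero_le_square[of q] by linarith
  qed
  have "p * angle_cos_form p q q w t = (p * cos t + q * sin t)\<^sup>2 + (p * w - q * q) * (sin t)\<^sup>2"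
    by (simp add: angle_cos_form_def power2_eq_square algebra_simps)
  also have "\<dots> > 0"
  proof (cases "sin t = 0")
    case True
    then have "cos t \<noteq> 0" using sin_cos_squared_add[of t] by auto
    then show ?thesis using True \<open>p > 0\<close> by simp
  next
    case False
    then show ?thesis using det by (simp add: add_nonneg_pos)
  qed
  finally show ?thesis using \<open>p > 0\<close> by (simp add: zero_less_mult_iff)
qed

lemma mobius_lift_rotation: "mobius_lift (cos \<alpha>) (- sin \<alpha>) (sin \<alpha>) (cos \<alpha>) (\<lambda>x. x + 2 * \<alpha>)"
proof -
  have d: "((\<lambda>x. x + 2 * \<alpha>) has_real_derivative 1) (at x)" for x
    by (auto intro!: derivative_eq_intros)
  then have deriv_eq: "deriv (\<lambda>x. x + 2 * \<alpha>) x = 1" for x by (rule DERIV_imp_deriv)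
  have half: "(x + 2 * \<alpha>) / 2 = x / 2 + \<alpha>" for x :: real by simp
  show ?thesis
    unfolding mobius_lift_def deriv_eq half using d real_differentiable_def
    by (auto simp: cos_add sin_add algebra_simps)
qed

lemma exists_angle_aligned:
  fixes u v :: real
  assumes "(u, v) \<noteq> (0, 0)"
  obtains \<alpha> where "cos \<alpha> * v = sin \<alpha> * u" and "cos \<alpha> * u + sin \<alpha> * v > 0"
proof -
  define \<rho> where "\<rho> = sqrt (u\<^sup>2 + v\<^sup>2)"
  have "\<rho> > 0" using assms by (auto simp: \<rho>_def sum_power2_gt_zero_iff)
  then have "(u / \<rho>)\<^sup>2 + (v / \<rho>)\<^sup>2 = 1"
    using assms by (simp add: \<rho>_def power_divide add_divide_distrib[symmetric])
  then obtain \<alpha> where "u / \<rho> = cos \<alpha>" "v / \<rho> = sin \<alpha>" by (rule sincos_total_2pi)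
  moreover have "u * (u / \<rho>) + v * (v / \<rho>) = \<rho>"
  proof -
    have "u * (u / \<rho>) + v * (v / \<rho>) = (u\<^sup>2 + v\<^sup>2) / \<rho>"
      by (simp add: power2_eq_square add_divide_distrib)
    also have "u\<^sup>2 + v\<^sup>2 = \<rho> * \<rho>" by (simp add: \<rho>_def)
    finally show ?thesis using \<open>\<rho> > 0\<close> by simp
  qed
  ultimately show ?thesis using \<open>\<rho> > 0\<close> by (intro that[of \<alpha>]) (auto simp: field_simps)
qed

lemma proj_mobius_lift_exists:
  assumes det: "a * d - b * c = 1"
  shows "\<exists>f \<in> carrier DiffT. proj_mobius_lift a b c d f"
proof -
  have "(a + d)\<^sup>2 + (c - b)\<^sup>2 = (a - d)\<^sup>2 + (b + c)\<^sup>2 + 4 * (a * d - b * c)"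
    by (simp add: power2_eq_square algebra_simps)
  then have "(a + d)\<^sup>2 + (c - b)\<^sup>2 = (a - d)\<^sup>2 + (b + c)\<^sup>2 + 4" using det by simp
  then have "(a + d)\<^sup>2 + (c - b)\<^sup>2 \<ge> 4" by simp
  then have "(a + d, c - b) \<noteq> (0, 0)" by auto
  then obtain \<alpha> where aligned: "cos \<alpha> * (c - b) = sin \<alpha> * (a + d)"
    and trace: "cos \<alpha> * (a + d) + sin \<alpha> * (c - b) > 0"
    by (rule exists_angle_aligned)
  txt \<open>Polar decomposition: rotating by - alpha makes the matrix symmetric positive definite.\<close>
  define p where "p = cos \<alpha> * a + sin \<alpha> * c"
  define q where "q = cos \<alpha> * b + sin \<alpha> * d"
  define w where "w = - sin \<alpha> * b + cos \<alpha> * d"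
  have cs: "(cos \<alpha>)\<^sup>2 + (sin \<alpha>)\<^sup>2 = 1" by simp
  have r: "- sin \<alpha> * a + cos \<alpha> * c = q" using aligned by (simp add: q_def algebra_simps)
  have det': "p * w - q * q = 1"
  proof -
    have "p * w - q * (- sin \<alpha> * a + cos \<alpha> * c) = ((cos \<alpha>)\<^sup>2 + (sin \<alpha>)\<^sup>2) * (a * d - b * c)"
      unfolding p_def q_def w_def by algebra
    then show ?thesis using det r by simp
  qed
  have "p + w > 0" using trace by (simp add: p_def w_def algebra_simps)
  then have pos: "angle_cos_form p q q w t > 0" for t using angle_cos_form_pos[OF det'] by blast
  define f where "f = (\<lambda>x. x + 2 * \<alpha>) \<circ> arctan_lift p q q w"
  have "mobius_lift (cos \<alpha> * p + - sin \<alpha> * q) (cos \<alpha> * q + - sin \<alpha> * w)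
      (sin \<alpha> * p + cos \<alpha> * q) (sin \<alpha> * q + cos \<alpha> * w) f"
    unfolding f_def by (intro mobius_lift_comp mobius_lift_rotation mobius_lift_arctan_lift det' pos)
  moreover have "cos \<alpha> * p + - sin \<alpha> * q = a" "cos \<alpha> * q + - sin \<alpha> * w = b"
    "sin \<alpha> * p + cos \<alpha> * q = c" "sin \<alpha> * q + cos \<alpha> * w = d"
    using cs r unfolding p_def q_def w_def by algebra+
  ultimately have "proj_mobius_lift a b c d f" by (simp add: proj_mobius_lift_def)
  moreover have "f (x + 2 * pi) = f x + 2 * pi" for x
    using mobius_lift_arctan_lift(2)[OF det' pos] by (simp add: f_def)
  ultimately show ?thesis
    using normalize_lift_in_carrier proj_mobius_lift_normalize by blast
qed

lemma add_2pi_int_shift: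
  fixes m :: int
  assumes "\<And>x. y (x + 2 * pi) = y x + 2 * pi"
  shows "y (x + 2 * pi * of_int m) = y x + 2 * pi * of_int m"
proof -
  have nat: "y (x + 2 * pi * real n) = y x + 2 * pi * real n" for x and n :: nat
  proof (induction n)
    case (Suc n)
    have "y (x + 2 * pi * real (Suc n)) = y (x + 2 * pi * real n + 2 * pi)"
      by (simp add: algebra_simps)
    also have "\<dots> = y x + 2 * pi * real n + 2 * pi" using Suc assms by simp
    finally show ?case by (simp add: algebra_simps)
  qed simp
  show ?thesis
  proof (cases "m \<ge> 0")
    case True
    then show ?thesis using nat[of x "nat m"] by simp
  next
    case False
    then show ?thesis using nat[of "x + 2 * pi * of_int m" "nat (- m)"] by simp
  qed
qed

lemma normalize_lift_shift: "normalize_lift (\<lambda>x. h x - 2 * pi * of_int m) = normalize_lift h"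
proof -
  have "(h 0 - 2 * pi * of_int m) / (2 * pi) = h 0 / (2 * pi) - of_int m" by (simp add: field_simps)
  then have floor_eq: "\<lfloor>(h 0 - 2 * pi * of_int m) / (2 * pi)\<rfloor> = \<lfloor>h 0 / (2 * pi)\<rfloor> - m" by simp
  show ?thesis unfolding normalize_lift_def floor_eq by (simp add: algebra_simps)
qed

lemma normalize_lift_id:
  assumes "0 \<le> f 0" "f 0 < 2 * pi"
  shows "normalize_lift f = f"
proof -
  have "\<lfloor>f 0 / (2 * pi)\<rfloor> = 0" using assms by (simp add: floor_eq_iff)
  then show ?thesis unfolding normalize_lift_def by simp
qed

lemma DiffT_normalize_assoc:
  assumes "y \<in> carrier DiffT"
  shows "normalize_lift (normalize_lift (y \<circ> f) \<circ> g) = normalize_lift (y \<circ> normalize_lift (f \<circ> g))"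
proof -
  have "y \<circ> normalize_lift (f \<circ> g) = (\<lambda>x. y (f (g x)) - 2 * pi * of_int \<lfloor>f (g 0) / (2 * pi)\<rfloor>)"
    using add_2pi_int_shift[of y, OF DiffT_carrierD(2)[OF assms], of _ "- \<lfloor>f (g 0) / (2 * pi)\<rfloor>"]
    by (simp add: normalize_lift_def fun_eq_iff)
  moreover have "normalize_lift (y \<circ> f) \<circ> g = (\<lambda>x. y (f (g x)) - 2 * pi * of_int \<lfloor>y (f 0) / (2 * pi)\<rfloor>)"
    by (simp add: normalize_lift_def fun_eq_iff)
  ultimately show ?thesis by (simp add: normalize_lift_shift)
qed

lemma DiffT_inv_eq:
  assumes "f \<in> carrier DiffT" "g \<in> carrier DiffT"
    and "normalize_lift (f \<circ> g) = id" "normalize_lift (g \<circ> f) = id"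
  shows "inv\<^bsub>DiffT\<^esub> f = g"
  unfolding m_inv_def
proof (rule the_equality)
  show "g \<in> carrier DiffT \<and> f \<otimes>\<^bsub>DiffT\<^esub> g = \<one>\<^bsub>DiffT\<^esub> \<and> g \<otimes>\<^bsub>DiffT\<^esub> f = \<one>\<^bsub>DiffT\<^esub>"
    using assms by (simp add: DiffT_def)
  fix y
  assume "y \<in> carrier DiffT \<and> f \<otimes>\<^bsub>DiffT\<^esub> y = \<one>\<^bsub>DiffT\<^esub> \<and> y \<otimes>\<^bsub>DiffT\<^esub> f = \<one>\<^bsub>DiffT\<^esub>"
  then have y: "y \<in> carrier DiffT" and yf: "normalize_lift (y \<circ> f) = id" by (simp_all add: DiffT_def)
  have "y = normalize_lift (y \<circ> normalize_lift (f \<circ> g))"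
    using assms(3) normalize_lift_id DiffT_carrierD(3,4)[OF y] by (simp add: o_def)
  also have "\<dots> = normalize_lift (normalize_lift (y \<circ> f) \<circ> g)"
    by (rule DiffT_normalize_assoc[OF y, symmetric])
  also have "\<dots> = g" using yf normalize_lift_id DiffT_carrierD(3,4)[OF assms(2)] by simp
  finally show "y = g" .
qed

definition lift_matrices :: "(real \<Rightarrow> real) \<Rightarrow> (real^2^2) set" where
  "lift_matrices f = {M. proj_mobius_lift (M $ 1 $ 1) (M $ 1 $ 2) (M $ 2 $ 1) (M $ 2 $ 2) f}"

lemma mobius_lifts_iff_lift_matrices:
  "f \<in> mobius_lifts \<longleftrightarrow> f \<in> carrier DiffT \<and> (\<exists>M. det M = 1 \<and> M \<in> lift_matrices f)"
proof
  assume "f \<in> mobius_lifts"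
  then obtain a b c d where "f \<in> carrier DiffT" "a * d - b * c = 1" "mobius_lift a b c d f"
    by (auto simp: mobius_lifts_def)
  then show "f \<in> carrier DiffT \<and> (\<exists>M. det M = 1 \<and> M \<in> lift_matrices f)"
    by (intro conjI exI[of _ "vector [vector [a, b], vector [c, d]]"])
      (auto simp: det_2 lift_matrices_def proj_mobius_lift_def)
next
  assume "f \<in> carrier DiffT \<and> (\<exists>M. det M = 1 \<and> M \<in> lift_matrices f)"
  then obtain a b c d where "f \<in> carrier DiffT" "a * d - b * c = 1" "proj_mobius_lift a b c d f"
    by (auto simp: lift_matrices_def det_2)
  moreover have "(- a) * (- d) - (- b) * (- c) = 1" using \<open>a * d - b * c = 1\<close> by simp
  ultimately show "f \<in> mobius_lifts"
    unfolding mobius_lifts_def proj_mobius_lift_def by blast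
qed

lemma lift_matrices_eq:
  assumes "A \<in> lift_matrices f"
  shows "lift_matrices f = {A, - A}"
proof -
  have "N = A \<or> N = - A" if "N \<in> lift_matrices f" for N
    using proj_mobius_lift_matrix_unique[of "A $ 1 $ 1" "A $ 1 $ 2" "A $ 2 $ 1" "A $ 2 $ 2" f
        "N $ 1 $ 1" "N $ 1 $ 2" "N $ 2 $ 1" "N $ 2 $ 2"] assms that
    by (simp add: lift_matrices_def vec_eq_iff forall_2)
  then show ?thesis using assms by (auto simp: lift_matrices_def proj_mobius_lift_neg_iff)
qed

lemma lift_matrices_unique:
  assumes "f \<in> carrier DiffT" "g \<in> carrier DiffT" "A \<in> lift_matrices f" "A \<in> lift_matrices g"
  shows "f = g"
  using assms proj_mobius_lift_unique DiffT_carrierD(3,4) by (simp add: lift_matrices_def)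

lemma lift_matrices_exists: "det M = 1 \<Longrightarrow> \<exists>f \<in> carrier DiffT. M \<in> lift_matrices f"
  using proj_mobius_lift_exists by (simp add: det_2 lift_matrices_def)

lemma mat_1_in_lift_matrices_id: "mat 1 \<in> lift_matrices id"
  using mobius_lift_rotation[of 0] by (simp add: lift_matrices_def proj_mobius_lift_def mat_def id_def)

lemma id_in_carrier_DiffT: "id \<in> carrier DiffT"
  using mobius_lift_rotation[of 0] by (intro carrier_DiffT_if_mobius_lift) (auto simp: id_def)

lemma normalize_comp_lift_matrices:
  assumes "f \<in> carrier DiffT" "g \<in> carrier DiffT" "A \<in> lift_matrices f" "B \<in> lift_matrices g"
  shows "normalize_lift (f \<circ> g) \<in> carrier DiffT" and "A ** B \<in> lift_matrices (normalize_lift (f \<circ> g))"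
proof -
  have "proj_mobius_lift ((A ** B) $ 1 $ 1) ((A ** B) $ 1 $ 2) ((A ** B) $ 2 $ 1) ((A ** B) $ 2 $ 2)
      (f \<circ> g)"
    using proj_mobius_lift_comp assms(3,4)
    by (simp add: lift_matrices_def matrix_matrix_mult_def sum_2)
  moreover have "(f \<circ> g) (x + 2 * pi) = (f \<circ> g) x + 2 * pi" for x
    using DiffT_carrierD(2)[OF assms(1)] DiffT_carrierD(2)[OF assms(2)] by simp
  ultimately show "normalize_lift (f \<circ> g) \<in> carrier DiffT"
    and "A ** B \<in> lift_matrices (normalize_lift (f \<circ> g))"
    by (auto intro: normalize_lift_in_carrier simp: proj_mobius_lift_normalize lift_matrices_def)
qed

lemma normalize_comp_eq_id:
  assumes "f \<in> carrier DiffT" "g \<in> carrier DiffT" "A \<in> lift_matrices f" "B \<in> lift_matrices g"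
    and "A ** B = mat 1"
  shows "normalize_lift (f \<circ> g) = id"
  using normalize_comp_lift_matrices[OF assms(1-4)] assms(5)
    id_in_carrier_DiffT mat_1_in_lift_matrices_id
  by (auto intro: lift_matrices_unique)

lemma mobius_lifts_subgroup: "subgroup mobius_lifts DiffT"
proof
  show "mobius_lifts \<subseteq> carrier DiffT" by (auto simp: mobius_lifts_def)
  show "\<one>\<^bsub>DiffT\<^esub> \<in> mobius_lifts"
    using id_in_carrier_DiffT mat_1_in_lift_matrices_id
    by (auto simp: DiffT_def mobius_lifts_iff_lift_matrices intro!: exI[of _ "mat 1"])
next
  fix f g assume "f \<in> mobius_lifts" "g \<in> mobius_lifts"
  then obtain A B where "f \<in> carrier DiffT" "g \<in> carrier DiffT" "det A = 1" "det B = 1"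
    "A \<in> lift_matrices f" "B \<in> lift_matrices g"
    by (auto simp: mobius_lifts_iff_lift_matrices)
  then show "f \<otimes>\<^bsub>DiffT\<^esub> g \<in> mobius_lifts"
    using normalize_comp_lift_matrices[of f g A B]
    by (auto simp: DiffT_def mobius_lifts_iff_lift_matrices det_mul intro!: exI[of _ "A ** B"])
next
  fix f assume "f \<in> mobius_lifts"
  then obtain A where f: "f \<in> carrier DiffT" and A: "det A = 1" "A \<in> lift_matrices f"
    by (auto simp: mobius_lifts_iff_lift_matrices)
  then obtain B where AB: "A ** B = mat 1" "B ** A = mat 1"
    using invertible_det_nz[of A] by (auto simp: invertible_def)
  then have "det B = 1" using det_mul[of A B] A by simp
  then obtain g where g: "g \<in> carrier DiffT" "B \<in> lift_matrices g" using lift_matrices_exists by blast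
  then have "inv\<^bsub>DiffT\<^esub> f = g"
    using normalize_comp_eq_id[OF f g(1) A(2) g(2) AB(1)] normalize_comp_eq_id[OF g(1) f g(2) A(2) AB(2)]
    by (intro DiffT_inv_eq f g(1))
  then show "inv\<^bsub>DiffT\<^esub> f \<in> mobius_lifts"
    using g \<open>det B = 1\<close> by (auto simp: mobius_lifts_iff_lift_matrices)
qed

section \<open>The isomorphism with PSL(2,R)\<close>

lemma matrix_mul_neg_left: "(- A) ** B = - (A ** (B :: 'a::comm_ring_1^'n^'m))"
  by (simp add: matrix_matrix_mult_def vec_eq_iff sum_negf)

lemma matrix_mul_neg_right: "A ** (- B) = - (A ** (B :: 'a::comm_ring_1^'n^'m))"
  by (simp add: matrix_matrix_mult_def vec_eq_iff sum_negf)

lemma PSL2R_carrier: "carrier PSL2R = {{M, - M} | M. det M = 1}"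
proof -
  have "{mat 1, - mat 1} #>\<^bsub>SL2R\<^esub> M = {M, - M}" for M
    by (auto simp: r_coset_def SL2R_def matrix_mul_neg_left)
  then show ?thesis by (auto simp: PSL2R_def FactGroup_def RCOSETS_def SL2R_def)
qed

lemma PSL2R_mult: "{A, - A} \<otimes>\<^bsub>PSL2R\<^esub> {B, - B} = {A ** B, - (A ** B)}"
  by (auto simp: PSL2R_def FactGroup_def set_mult_def SL2R_def matrix_mul_neg_left matrix_mul_neg_right)

lemma lift_matrices_iso: "lift_matrices \<in> iso (DiffT\<lparr>carrier := mobius_lifts\<rparr>) PSL2R"
proof -
  have "lift_matrices f \<in> carrier PSL2R" if "f \<in> mobius_lifts" for f
    using that lift_matrices_eq unfolding PSL2R_carrier mobius_lifts_iff_lift_matrices by blast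
  moreover have "lift_matrices (normalize_lift (f \<circ> g)) = lift_matrices f \<otimes>\<^bsub>PSL2R\<^esub> lift_matrices g"
    if fg: "f \<in> mobius_lifts" "g \<in> mobius_lifts" for f g
  proof -
    obtain A B where "f \<in> carrier DiffT" "g \<in> carrier DiffT" "A \<in> lift_matrices f" "B \<in> lift_matrices g"
      using fg unfolding mobius_lifts_iff_lift_matrices by blast
    then have "A ** B \<in> lift_matrices (normalize_lift (f \<circ> g))"
      by (rule normalize_comp_lift_matrices(2))
    then show ?thesis
      using lift_matrices_eq[of A f] lift_matrices_eq[of B g] lift_matrices_eq[of "A ** B"]
        \<open>A \<in> lift_matrices f\<close> \<open>B \<in> lift_matrices g\<close> by (simp add: PSL2R_mult)
  qed
  moreover have "inj_on lift_matrices mobius_lifts"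
  proof (rule inj_onI)
    fix f g assume "f \<in> mobius_lifts" "g \<in> mobius_lifts" "lift_matrices f = lift_matrices g"
    then show "f = g"
      using lift_matrices_unique by (auto simp: mobius_lifts_iff_lift_matrices)
  qed
  moreover have "carrier PSL2R \<subseteq> lift_matrices ` mobius_lifts"
  proof
    fix X assume "X \<in> carrier PSL2R"
    then obtain M where X: "X = {M, - M}" and "det M = 1" by (auto simp: PSL2R_carrier)
    then obtain f where "f \<in> carrier DiffT" "M \<in> lift_matrices f" using lift_matrices_exists by blast
    then have "f \<in> mobius_lifts" and "X = lift_matrices f"
      using X \<open>det M = 1\<close> lift_matrices_eq by (auto simp: mobius_lifts_iff_lift_matrices)
    then show "X \<in> lift_matrices ` mobius_lifts" by blast
  qed
  ultimately show ?thesis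
    unfolding iso_def hom_def bij_betw_def by (auto simp: DiffT_def)
qed

theorem mainTheorem8:
  fixes c :: real
  assumes "c \<noteq> 0"
  shows "isom_plus c = ker_S_c c \<and> subgroup (isom_plus c) DiffT
         \<and> DiffT\<lparr>carrier := isom_plus c\<rparr> \<cong> PSL2R"
  using isom_plus_eq_mobius_lifts[OF assms] ker_S_c_eq_mobius_lifts[OF assms]
    mobius_lifts_subgroup lift_matrices_iso
  by (auto intro: is_isoI)

end
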